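(* Fix $L\ge20$. For any pattern $(\mathbf a,\mathbf e)$ there exists $S\subseteq V(\Gamma)$ such that $p_{\mathrm{SD}}((\mathbf a,\mathbf e)_S)\ge p_{\mathrm{SD}}(\mathbf a,\mathbf e)-55L\sqrt d$ and, for all $(i,w)\in S$, \[\sum_{(i',w')\in N_{\Gamma_{\mathrm{SD}}}(i,w)\cap S}\frac{a_{i,w}a_{i',w'}}{n}\cdot\frac{\epsilon_{i,w,i',w'}^2}{15}\ge\frac L{10}\,a_{i,w}\log\Big(\frac{en}{a_{i,w}}\Big),\] where the right side is interpreted as $0$ when $a_{i,w}=0$.
   Context: $d\ge2$, $H$ is a $d$-regular graph on $[h]$. $D^{>0}=\{2^k/\sqrt{nh}:k\in\mathbb{Z},k\ge0\}$; $\Gamma$ is the graph on $[h]\times D^{>0}$ with $(i,w)\sim_\Gamma(i',w')$ iff $ii'\in E(H)$ and $w/w'\in(d^{-1/2},d^{1/2})$. A pattern is $(\mathbf a,\mathbf e)$: nonnegative integers $a_{i,w}$ with $\sum_wa_{i,w}\le n$ for each $i$, $\sum w^2a_{i,w}\le10$, some $w_0\in D^{>0}$ with $a_{i,w}=0$ unless $w_0\le w\le dw_0$; integers $e_{i,w,i',w'}$ for edges of $\Gamma$ (symmetric) with $0\le e\le\min(a_{i,w},a_{i',w'})$. Sub-pattern $(\mathbf a,\mathbf e)_S$: keep $a_{i,w}$ for $(i,w)\in S$ (else $0$) and $e$ on edges inside $S$ (else $0$). $\epsilon_{i,w,i',w'}=e_{i,w,i',w'}n/(a_{i,w}a_{i',w'})-1$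 if $a_{i,w},a_{i',w'}\ne0$, and $=1$ otherwise. $\Gamma_{\mathrm{SD}}=\Gamma_{\mathrm{SD}}(\mathbf a,\mathbf e)$ is the spanning subgraph of $\Gamma$ consisting of the edges with $-1\le\epsilon_{i,w,i',w'}\le e^2-1$, and $p_{\mathrm{SD}}(\mathbf a,\mathbf e)=\big|\sum_{(i,w)(i',w')\in E(\Gamma_{\mathrm{SD}})}\frac{ww'a_{i,w}a_{i',w'}}{n}\epsilon_{i,w,i',w'}\big|$ (with $\Gamma_{\mathrm{SD}}$ determined by the pattern in question). *)

theory Defs
  imports "HOL-Analysis.Analysis"
begin

text \<open>Vertices of Gamma: pairs (i,k) with i < h (i.e. i in [h] = {0..<h}) and k :: nat,
  where k encodes the weight w = 2^k / sqrt(n h) in D^{>0}.\<close>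

definition wt :: "nat \<Rightarrow> nat \<Rightarrow> nat \<Rightarrow> real" where
  "wt n h k = 2 ^ k / sqrt (real n * real h)"

definition regular_graph :: "nat \<Rightarrow> nat \<Rightarrow> (nat \<Rightarrow> nat \<Rightarrow> bool) \<Rightarrow> bool" where
  "regular_graph h d E \<longleftrightarrow>
     (\<forall>i j. E i j \<longrightarrow> i < h \<and> j < h) \<and> (\<forall>i j. E i j \<longrightarrow> E j i) \<and> (\<forall>i. \<not> E i i) \<and>
     (\<forall>i<h. card {j. E i j} = d)"

definition gamma_edge :: "(nat \<Rightarrow> nat \<Rightarrow> bool) \<Rightarrow> nat \<Rightarrow> nat \<Rightarrow> nat \<Rightarrow> nat \<times> nat \<Rightarrow> nat \<times> nat \<Rightarrow> bool" where
  "gamma_edge E d n h v v' \<longleftrightarrow>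
     E (fst v) (fst v') \<and>
     1 / sqrt (real d) < wt n h (snd v) / wt n h (snd v') \<and>
     wt n h (snd v) / wt n h (snd v') < sqrt (real d)"

definition is_pattern :: "(nat \<Rightarrow> nat \<Rightarrow> bool) \<Rightarrow> nat \<Rightarrow> nat \<Rightarrow> nat \<Rightarrow>
    (nat \<times> nat \<Rightarrow> nat) \<Rightarrow> (nat \<times> nat \<Rightarrow> nat \<times> nat \<Rightarrow> nat) \<Rightarrow> bool" where
  "is_pattern E d n h a e \<longleftrightarrow>
     (\<forall>i k. h \<le> i \<longrightarrow> a (i, k) = 0) \<and>
     (\<forall>i<h. (\<Sum>k | a (i, k) \<noteq> 0. a (i, k)) \<le> n) \<and>
     (\<Sum>v | a v \<noteq> 0. (wt n h (snd v))\<^sup>2 * real (a v)) \<le> 10 \<and>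
     (\<exists>k0. \<forall>v. a v \<noteq> 0 \<longrightarrow> wt n h k0 \<le> wt n h (snd v) \<and> wt n h (snd v) \<le> real d * wt n h k0) \<and>
     (\<forall>v v'. gamma_edge E d n h v v' \<longrightarrow> e v v' = e v' v \<and> e v v' \<le> min (a v) (a v'))"

definition sub_a :: "(nat \<times> nat) set \<Rightarrow> (nat \<times> nat \<Rightarrow> nat) \<Rightarrow> nat \<times> nat \<Rightarrow> nat" where
  "sub_a S a v = (if v \<in> S then a v else 0)"

definition sub_e :: "(nat \<times> nat) set \<Rightarrow> (nat \<times> nat \<Rightarrow> nat \<times> nat \<Rightarrow> nat) \<Rightarrow> nat \<times> nat \<Rightarrow> nat \<times> nat \<Rightarrow> nat" where
  "sub_e S e v v' = (if v \<in> S \<and> v' \<in> S then e v v' else 0)"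

definition eps :: "nat \<Rightarrow> (nat \<times> nat \<Rightarrow> nat) \<Rightarrow> (nat \<times> nat \<Rightarrow> nat \<times> nat \<Rightarrow> nat) \<Rightarrow> nat \<times> nat \<Rightarrow> nat \<times> nat \<Rightarrow> real" where
  "eps n a e v v' = (if a v \<noteq> 0 \<and> a v' \<noteq> 0
      then real (e v v') * real n / (real (a v) * real (a v')) - 1 else 1)"

definition sd_edge :: "(nat \<Rightarrow> nat \<Rightarrow> bool) \<Rightarrow> nat \<Rightarrow> nat \<Rightarrow> nat \<Rightarrow>
    (nat \<times> nat \<Rightarrow> nat) \<Rightarrow> (nat \<times> nat \<Rightarrow> nat \<times> nat \<Rightarrow> nat) \<Rightarrow> nat \<times> nat \<Rightarrow> nat \<times> nat \<Rightarrow> bool" where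
  "sd_edge E d n h a e v v' \<longleftrightarrow> gamma_edge E d n h v v' \<and>
     -1 \<le> eps n a e v v' \<and> eps n a e v v' \<le> (exp 1)\<^sup>2 - 1"

text \<open>p_SD: sum over (unordered) edges of Gamma_SD, written as half the sum over ordered pairs.\<close>
definition p_SD :: "(nat \<Rightarrow> nat \<Rightarrow> bool) \<Rightarrow> nat \<Rightarrow> nat \<Rightarrow> nat \<Rightarrow>
    (nat \<times> nat \<Rightarrow> nat) \<Rightarrow> (nat \<times> nat \<Rightarrow> nat \<times> nat \<Rightarrow> nat) \<Rightarrow> real" where
  "p_SD E d n h a e = \<bar>(1/2) * (\<Sum>\<^sub>\<infinity>(v, v') \<in> {(v, v'). sd_edge E d n h a e v v'}.
       wt n h (snd v) * wt n h (snd v') * real (a v) * real (a v') / real n * eps n a e v v')\<bar>"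

end

theory Submission
  imports Defs
begin

(* Only the finite box B = [h] x {k_min, ..., k_min + d - 1} of vertices of Gamma can carry
   mass, and p_SD is (half the absolute value of) a finite double sum over B.  Starting from
   U = B we repeatedly delete a vertex v violating the degree condition.  Deleting v changes
   the double sum by twice the sum of v's incident terms inside U, and for a violating vertex
   Cauchy-Schwarz bounds that sum by
       Phi(v) = sqrt(3L/2) * w_v * n * phi(a_v/n) * sqrt(Y_i/n),    phi(x) = x sqrt(ln(e/x)),
   where Y_i is the weighted mass M_j = sum_k w_k^2 a_(j,k) summed over the H-neighbours j of i.
   The set S where the pruning stops satisfies the degree condition and p_SD dropped by at
   most sum_B Phi.  A telescoping argument gives sum_k 2^k phi(alpha_k) <= 13 sqrt 2
   sqrt(sum_k 4^k alpha_k), hence sum_k Phi(i,k) <= C sqrt(Y_i M_i); AM-GM and d-regularity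
   (sum_i Y_i = d sum_i M_i <= 10 d) then give sum_B Phi <= 55 L sqrt d. *)

(* phi(x) = x sqrt(ln(e/x)); the loss incurred by deleting a vertex of mass fraction x
   scales like phi(x), since the degree target is proportional to x ln(e/x). *)
definition phi :: "real \<Rightarrow> real" where "phi x = x * sqrt (ln (exp 1 / x))"

lemma phi_sq: "0 < x \<Longrightarrow> x \<le> 1 \<Longrightarrow> (phi x)^2 = x^2 * (1 - ln x)"
proof -
  assume x: "0 < x" "x \<le> 1"
  have "ln (exp 1 / x) = 1 - ln x" using x by (simp add: ln_div)
  moreover have "ln x \<le> 0" using x by simp
  ultimately show ?thesis unfolding phi_def by (simp add: power_mult_distrib)
qed

lemma phi_nonneg: "0 \<le> x \<Longrightarrow> x \<le> 1 \<Longrightarrow> 0 \<le> phi x"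
proof -
  assume x: "0 \<le> x" "x \<le> 1"
  show ?thesis
  proof (cases "x = 0")
    case False
    have "x \<le> exp 1" using x exp_ge_add_one_self[of 1] by linarith
    hence "1 \<le> exp 1 / x" using x False by (simp add: field_simps)
    thus ?thesis unfolding phi_def using x by simp
  qed (simp add: phi_def)
qed

(* phi is increasing on [0,1]: compare the squares x^2 (1 - ln x) via ln y - ln x <= (y - x)/x. *)
lemma phi_mono: assumes "0 \<le> x" "x \<le> y" "y \<le> 1" shows "phi x \<le> phi y"
proof (cases "x = 0")
  case True thus ?thesis using assms phi_nonneg[of y] by (simp add: phi_def)
next
  case False
  hence x: "0 < x" and y: "0 < y" using assms by auto
  have "x * (ln y - ln x) \<le> y - x"
    using ln_le_minus_one[of "y/x"] x y by (simp add: ln_div field_simps)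
  hence "x * (x * (ln y - ln x)) \<le> x * (y - x)" using x by (simp add: mult_left_mono)
  hence "x^2 * (ln y - ln x) \<le> x * (y - x)" by (simp add: power2_eq_square mult.assoc)
  moreover have "ln y \<le> 0" using y assms by simp
  moreover have "y^2 - x^2 \<le> (y^2 - x^2) * (1 - ln y)"
  proof -
    have "0 \<le> y^2 - x^2" using power_mono[of x y 2] assms by simp
    thus ?thesis using mult_left_mono[of 1 "1 - ln y" "y^2 - x^2"] \<open>ln y \<le> 0\<close> by simp
  qed
  moreover have "x * (y - x) \<le> y^2 - x^2" using assms x by (simp add: power2_eq_square algebra_simps)
  ultimately have "x^2 * (1 - ln x) \<le> y^2 * (1 - ln y)" by (simp add: algebra_simps)
  hence "(phi x)^2 \<le> (phi y)^2" using phi_sq x y assms by simp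
  thus ?thesis using phi_nonneg[of y] assms by (simp add: power2_le_iff_abs_le)
qed

lemma phi_le_1: "0 \<le> x \<Longrightarrow> x \<le> 1 \<Longrightarrow> phi x \<le> 1"
  using phi_mono[of x 1] by (simp add: phi_def)

lemma sqrt2_bounds: "1.41 < sqrt (2::real)" "sqrt (2::real) < 1.42"
proof -
  show "1.41 < sqrt (2::real)" by (rule real_less_rsqrt) (simp add: power2_eq_square)
  have "sqrt (2::real) < sqrt (1.42^2)" by (subst real_sqrt_less_iff) (simp add: power2_eq_square)
  thus "sqrt (2::real) < 1.42" by simp
qed

(* Key pointwise estimate: with t^2 = 2^k/s and the mass constraint t^4 x <= 1, the term
   t^2 phi(x) is dominated by a multiple of the increment of x |-> t/(1+t) between t and
   sqrt 2 t.  Small scales (t <= 1) only need phi <= 1 ... *)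
lemma phi_scaled_bound_small:
  assumes t: "0 < t" "t \<le> 1" and x: "0 \<le> x" "x \<le> 1"
  shows "t^2 * phi x \<le> 13 * sqrt 2 * (sqrt 2 - 1) * t / ((1 + t) * (1 + sqrt 2 * t))"
proof -
  have q: "sqrt 2 * sqrt 2 = (2::real)" "1.41 < sqrt (2::real)" "sqrt (2::real) < 1.42"
    using sqrt2_bounds by auto
  have "(1 + t) * (1 + sqrt 2 * t) \<le> 2 * (1 + sqrt 2)"
    using t q by (intro mult_mono) auto
  also have "\<dots> \<le> 26 - 13 * sqrt 2" using q by simp
  also have "\<dots> = 13 * sqrt 2 * (sqrt 2 - 1)" by (simp add: right_diff_distrib)
  finally have den: "(1 + t) * (1 + sqrt 2 * t) \<le> 13 * sqrt 2 * (sqrt 2 - 1)" .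
  have den_pos: "0 < (1 + t) * (1 + sqrt 2 * t)" using t by (simp add: add_pos_pos)
  have "t^2 * phi x \<le> t^2 * 1" using phi_le_1[OF x] by (intro mult_left_mono) auto
  also have "\<dots> \<le> t" using t by (simp add: power2_eq_square mult_left_le)
  also have "\<dots> \<le> 13 * sqrt 2 * (sqrt 2 - 1) * t / ((1 + t) * (1 + sqrt 2 * t))"
  proof -
    have "t * ((1 + t) * (1 + sqrt 2 * t)) \<le> t * (13 * sqrt 2 * (sqrt 2 - 1))"
      using den t by (intro mult_left_mono) auto
    thus ?thesis using den_pos by (simp add: pos_le_divide_eq mult.commute)
  qed
  finally show ?thesis .
qed

(* ... while large scales use monotonicity of phi and x <= t^-4, giving t^2 phi(x) <= sqrt 2 / t. *)
lemma phi_scaled_bound_large: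
  assumes t: "1 \<le> t" and x: "0 \<le> x" "t^4 * x \<le> 1"
  shows "t^2 * phi x \<le> 13 * sqrt 2 * (sqrt 2 - 1) * t / ((1 + t) * (1 + sqrt 2 * t))"
proof -
  have q: "sqrt 2 * sqrt 2 = (2::real)" "1.41 < sqrt (2::real)" "sqrt (2::real) < 1.42"
    using sqrt2_bounds by auto
  have t4: "1 \<le> t^4" using t by (simp add: one_le_power)
  have x_le: "x \<le> 1 / t^4" using x t4 by (subst pos_le_divide_eq) (auto simp: mult.commute)
  have "phi x \<le> phi (1 / t^4)" using phi_mono[OF x(1) x_le] t4 by (simp add: divide_le_eq_1)
  also have "\<dots> = 1 / t^4 * sqrt (1 + 4 * ln t)"
    using t by (simp add: phi_def ln_mult ln_realpow)
  also have "\<dots> \<le> 1 / t^4 * (sqrt 2 * t)"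
  proof -
    have "ln t \<le> t - 1" using ln_le_minus_one t by simp
    moreover have "0 \<le> (t - 1)^2" by simp
    ultimately have "1 + 4 * ln t \<le> 2 * t^2" by (simp add: power2_eq_square algebra_simps)
    also have "\<dots> = (sqrt 2 * t)^2" by (simp add: power_mult_distrib)
    finally have "sqrt (1 + 4 * ln t) \<le> sqrt 2 * t" by (rule real_le_lsqrt[rotated]) (use t in simp)
    thus ?thesis using t by (intro mult_left_mono) auto
  qed
  finally have phi_x: "phi x \<le> 1 / t^4 * (sqrt 2 * t)" .
  have "t^2 * phi x \<le> t^2 * (1 / t^4 * (sqrt 2 * t))" using phi_x by (intro mult_left_mono) auto
  also have "\<dots> = sqrt 2 / t" using t by (simp add: field_simps eval_nat_numeral)
  also have "\<dots> \<le> 13 * sqrt 2 * (sqrt 2 - 1) * t / ((1 + t) * (1 + sqrt 2 * t))"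
  proof -
    have "(1 + t) * (1 + sqrt 2 * t) \<le> (2 * t) * ((1 + sqrt 2) * t)"
      using t q by (intro mult_mono) (auto simp: algebra_simps)
    also have "\<dots> = 2 * (1 + sqrt 2) * t^2" by (simp add: power2_eq_square)
    also have "\<dots> \<le> 13 * (sqrt 2 - 1) * t^2" using q by (intro mult_right_mono) auto
    finally have "sqrt 2 * ((1 + t) * (1 + sqrt 2 * t)) \<le> sqrt 2 * (13 * (sqrt 2 - 1) * t^2)"
      by (intro mult_left_mono) auto
    hence "sqrt 2 * ((1 + t) * (1 + sqrt 2 * t)) \<le> 13 * sqrt 2 * (sqrt 2 - 1) * t * t"
      by (simp add: power2_eq_square mult_ac)
    moreover have "0 < (1 + t) * (1 + sqrt 2 * t)" using t by (simp add: add_pos_pos)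
    ultimately show ?thesis using t by (simp add: field_simps)
  qed
  finally show ?thesis .
qed

lemma phi_scaled_bound:
  assumes "0 < t" "0 \<le> x" "x \<le> 1" "t^4 * x \<le> 1"
  shows "t^2 * phi x \<le> 13 * sqrt 2 * (sqrt 2 - 1) * t / ((1 + t) * (1 + sqrt 2 * t))"
  using assms phi_scaled_bound_small[of t x] phi_scaled_bound_large[of t x] by fastforce

(* Potential G_s(k) = u/(1+u) with u = sqrt(2^k/s); it lies in [0,1] and increases in k,
   so its increments telescope to at most 1. *)
definition dyadic_potential :: "real \<Rightarrow> nat \<Rightarrow> real" where
  "dyadic_potential s k = sqrt (2^k / s) / (1 + sqrt (2^k / s))"

lemma dyadic_potential_bounds:
  assumes "0 < s" shows "0 \<le> dyadic_potential s k" "dyadic_potential s k \<le> 1"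
proof -
  define x where "x = sqrt (2^k / s)"
  have "0 \<le> x" unfolding x_def using assms by simp
  hence "0 \<le> x / (1 + x)" "x / (1 + x) \<le> 1" by (auto simp: field_simps)
  thus "0 \<le> dyadic_potential s k" "dyadic_potential s k \<le> 1"
    unfolding dyadic_potential_def x_def by auto
qed

lemma dyadic_potential_step:
  fixes s :: real and k :: nat
  assumes "0 < s"
  defines "t \<equiv> sqrt (2^k / s)"
  shows "dyadic_potential s (Suc k) - dyadic_potential s k
           = (sqrt 2 - 1) * t / ((1 + t) * (1 + sqrt 2 * t))"
proof -
  have t: "0 < t" unfolding t_def using assms by simp
  have "sqrt (2 ^ Suc k / s) = sqrt 2 * t"
    unfolding t_def by (simp add: real_sqrt_mult[symmetric] mult.assoc)
  moreover have "1 + sqrt 2 * t \<noteq> 0" using t by (smt (verit) real_sqrt_gt_zero mult_pos_pos)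
  ultimately show ?thesis using t unfolding dyadic_potential_def t_def[symmetric]
    by (simp add: field_simps)
qed

lemma dyadic_term_bound:
  assumes s: "0 < s" and x: "0 \<le> x" "x \<le> 1" and mass: "4^k * x \<le> s^2"
  shows "2^k * phi x \<le> 13 * sqrt 2 * s * (dyadic_potential s (Suc k) - dyadic_potential s k)"
proof -
  define t where "t = sqrt (2^k / s)"
  have t: "0 < t" unfolding t_def using s by simp
  have tt: "t^2 = 2^k / s" unfolding t_def using s by simp
  have "t^4 = (t^2)^2" by (simp flip: power_mult)
  also have "\<dots> = (2^k)^2 / s^2" by (simp add: tt power_divide)
  also have "\<dots> = 4^k / s^2" by (simp add: power2_eq_square flip: power_mult_distrib)
  finally have "t^4 * x = (4^k * x) / s^2" by simp
  also have "\<dots> \<le> 1" using mass s by (simp add: pos_divide_le_eq)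
  finally have t4x: "t^4 * x \<le> 1" .
  have "s * (t^2 * phi x) \<le> s * (13 * sqrt 2 * (sqrt 2 - 1) * t / ((1 + t) * (1 + sqrt 2 * t)))"
    using phi_scaled_bound[OF t x t4x] s by (intro mult_left_mono) auto
  thus ?thesis using s unfolding dyadic_potential_step[OF s] tt t_def[symmetric]
    by (simp add: field_simps)
qed

(* Dyadic sum bound: sum_k 2^k phi(alpha_k) <= 13 sqrt 2 sqrt(sum_k 4^k alpha_k), obtained by
   telescoping the potential at s = sqrt(sum_k 4^k alpha_k). *)
lemma dyadic_phi_sum_bound:
  assumes K: "finite K" and al: "\<And>k. k \<in> K \<Longrightarrow> 0 \<le> al k \<and> al k \<le> 1"
  shows "(\<Sum>k\<in>K. 2^k * phi (al k)) \<le> 13 * sqrt 2 * sqrt (\<Sum>k\<in>K. 4^k * al k)"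
proof -
  define X where "X = (\<Sum>k\<in>K. (4::real)^k * al k)"
  have X0: "X \<ge> 0" unfolding X_def using al by (intro sum_nonneg) auto
  show ?thesis
  proof (cases "X = 0")
    case True
    hence "\<forall>k\<in>K. 4^k * al k = 0"
      using sum_nonneg_eq_0_iff[OF K, of "\<lambda>k. 4^k * al k"] al unfolding X_def by auto
    thus ?thesis by (simp add: phi_def)
  next
    case False
    define s where "s = sqrt X"
    have s: "s > 0" unfolding s_def using X0 False by simp
    have ss: "s^2 = X" unfolding s_def using X0 by simp
    have term_bound: "2^k * phi (al k) \<le>
        13 * sqrt 2 * s * (dyadic_potential s (Suc k) - dyadic_potential s k)" if k: "k \<in> K" for k
    proof (rule dyadic_term_bound[OF s])
      show "0 \<le> al k" "al k \<le> 1" using al k by auto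
      show "4^k * al k \<le> s^2" unfolding ss X_def
        using member_le_sum[OF k, of "\<lambda>k. 4^k * al k"] al K by auto
    qed
    have increment_nonneg: "0 \<le> dyadic_potential s (Suc k) - dyadic_potential s k" for k
      unfolding dyadic_potential_step[OF s] using sqrt2_bounds s
      by (intro divide_nonneg_nonneg mult_nonneg_nonneg) auto
    obtain N where N: "K \<subseteq> {..<N}" using K finite_nat_iff_bounded by auto
    have "(\<Sum>k\<in>K. 2^k * phi (al k))
        \<le> (\<Sum>k\<in>K. 13 * sqrt 2 * s * (dyadic_potential s (Suc k) - dyadic_potential s k))"
      using term_bound by (rule sum_mono)
    also have "\<dots> \<le> (\<Sum>k<N. 13 * sqrt 2 * s * (dyadic_potential s (Suc k) - dyadic_potential s k))"
      using N increment_nonneg s by (intro sum_mono2) auto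
    also have "\<dots> = 13 * sqrt 2 * s * (dyadic_potential s N - dyadic_potential s 0)"
      by (simp add: sum_distrib_left[symmetric] sum_lessThan_telescope)
    also have "\<dots> \<le> 13 * sqrt 2 * s * 1"
      using dyadic_potential_bounds[OF s, of N] dyadic_potential_bounds[OF s, of 0] s
      by (intro mult_left_mono) auto
    finally show ?thesis unfolding s_def X_def by simp
  qed
qed

definition incident_sum :: "('v \<Rightarrow> 'v \<Rightarrow> bool) \<Rightarrow> ('v \<Rightarrow> 'v \<Rightarrow> real) \<Rightarrow> 'v set \<Rightarrow> 'v \<Rightarrow> real" where
  "incident_sum R f U v = (\<Sum>y\<in>U. if R v y then f v y else 0)"

definition edge_sum :: "('v \<Rightarrow> 'v \<Rightarrow> bool) \<Rightarrow> ('v \<Rightarrow> 'v \<Rightarrow> real) \<Rightarrow> 'v set \<Rightarrow> real" where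
  "edge_sum R f U = (\<Sum>x\<in>U. incident_sum R f U x)"

lemma edge_sum_remove:
  assumes U: "finite U" and v: "v \<in> U"
    and irr: "\<And>x. \<not> R x x" and sym: "\<And>x y. R x y \<Longrightarrow> R y x \<and> f x y = f y x"
  shows "edge_sum R f U = edge_sum R f (U - {v}) + 2 * incident_sum R f U v"
proof -
  let ?g = "\<lambda>x y. if R x y then f x y else 0"
  have g_sym: "?g x y = ?g y x" for x y
    using sym[of x y] sym[of y x] by (cases "R x y") auto
  have "edge_sum R f U = (\<Sum>y\<in>U. ?g v y) + (\<Sum>x\<in>U - {v}. \<Sum>y\<in>U. ?g x y)"
    unfolding edge_sum_def incident_sum_def by (rule sum.remove[OF U v])
  also have "(\<Sum>x\<in>U - {v}. \<Sum>y\<in>U. ?g x y) = (\<Sum>x\<in>U - {v}. ?g x v + (\<Sum>y\<in>U - {v}. ?g x y))"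
    by (intro sum.cong refl) (simp add: sum.remove[OF U v])
  also have "\<dots> = (\<Sum>x\<in>U - {v}. ?g v x) + edge_sum R f (U - {v})"
    unfolding edge_sum_def incident_sum_def sum.distrib using g_sym by simp
  also have "(\<Sum>x\<in>U - {v}. ?g v x) = (\<Sum>x\<in>U. ?g v x)"
    using U v irr by (simp add: sum.remove)
  finally show ?thesis unfolding incident_sum_def by simp
qed

lemma greedy_pruning:
  assumes B: "finite B"
    and irr: "\<And>x. \<not> R x x" and sym: "\<And>x y. R x y \<Longrightarrow> R y x \<and> f x y = f y x"
    and bad_vertex: "\<And>U v. U \<subseteq> B \<Longrightarrow> v \<in> U \<Longrightarrow> \<not> good U v \<Longrightarrow> \<bar>incident_sum R f U v\<bar> \<le> cost v"
    and U: "U \<subseteq> B"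
  shows "\<exists>S \<subseteq> U. (\<forall>v\<in>S. good S v) \<and> \<bar>edge_sum R f U - edge_sum R f S\<bar> \<le> 2 * (\<Sum>v\<in>U - S. cost v)"
  using U
proof (induction "card U" arbitrary: U rule: less_induct)
  case less
  have U: "finite U" using less.prems B finite_subset by auto
  show ?case
  proof (cases "\<forall>v\<in>U. good U v")
    case True thus ?thesis by (intro exI[of _ U]) auto
  next
    case False
    then obtain v where v: "v \<in> U" "\<not> good U v" by auto
    have "card (U - {v}) < card U" using U v by (meson card_Diff1_less)
    then obtain S where S: "S \<subseteq> U - {v}" "\<forall>v\<in>S. good S v"
      "\<bar>edge_sum R f (U - {v}) - edge_sum R f S\<bar> \<le> 2 * (\<Sum>w\<in>U - {v} - S. cost w)"
      using less.hyps[of "U - {v}"] less.prems by auto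
    have "U - S = insert v (U - {v} - S)" using S v by auto
    hence "(\<Sum>w\<in>U - S. cost w) = cost v + (\<Sum>w\<in>U - {v} - S. cost w)" using U by simp
    moreover have "edge_sum R f U = edge_sum R f (U - {v}) + 2 * incident_sum R f U v"
      by (rule edge_sum_remove[OF U v(1) irr sym])
    moreover have "\<bar>incident_sum R f U v\<bar> \<le> cost v" using bad_vertex less.prems v by auto
    ultimately have "\<bar>edge_sum R f U - edge_sum R f S\<bar> \<le> 2 * (\<Sum>w\<in>U - S. cost w)"
      using S(3) by (simp add: abs_le_iff)
    thus ?thesis using S by (intro exI[of _ S]) auto
  qed
qed

lemma infsum_pairs_eq_edge_sum:
  fixes f :: "'v \<Rightarrow> 'v \<Rightarrow> real"
  assumes A: "finite A" and vanish: "\<And>v v'. R v v' \<Longrightarrow> \<not> (v \<in> A \<and> v' \<in> A) \<Longrightarrow> f v v' = 0"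
  shows "(\<Sum>\<^sub>\<infinity>(v, v')\<in>{(v, v'). R v v'}. f v v') = edge_sum R f A"
proof -
  have "(\<Sum>\<^sub>\<infinity>(v, v')\<in>{(v, v'). R v v'}. f v v') = (\<Sum>\<^sub>\<infinity>(v, v')\<in>{p\<in>A\<times>A. R (fst p) (snd p)}. f v v')"
    by (rule infsum_cong_neutral) (use vanish in auto)
  also have "\<dots> = (\<Sum>(v, v')\<in>{p\<in>A\<times>A. R (fst p) (snd p)}. f v v')"
    using A by (intro infsum_finite) auto
  also have "\<dots> = (\<Sum>p\<in>A\<times>A. if R (fst p) (snd p) then f (fst p) (snd p) else 0)"
    using A by (subst sum.inter_filter) (auto simp: case_prod_unfold intro!: sum.cong)
  also have "\<dots> = edge_sum R f A"
    unfolding edge_sum_def incident_sum_def by (simp add: sum.cartesian_product split_beta)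
  finally show ?thesis .
qed

lemma infsum_neighbours_eq_incident_sum:
  fixes f :: "'v \<Rightarrow> 'v \<Rightarrow> real"
  assumes "finite S"
  shows "(\<Sum>\<^sub>\<infinity>y \<in> {y. R v y} \<inter> S. f v y) = incident_sum R f S v"
proof -
  have "{y. R v y} \<inter> S = {y\<in>S. R v y}" by auto
  thus ?thesis unfolding incident_sum_def using assms by (simp add: sum.inter_filter)
qed

lemma loss_constant:
  assumes "(20::real) \<le> L" shows "sqrt (3/2 * L) * (13 * sqrt 2) * 10 \<le> 55 * L"
proof -
  have "(sqrt (3/2 * L) * (13 * sqrt 2) * 10)^2 = 3/2 * L * 33800"
    using assms by (simp add: power_mult_distrib)
  also have "\<dots> \<le> (55 * L)^2" using assms by (simp add: power2_eq_square)
  finally show ?thesis by (rule power2_le_imp_le) (use assms in auto)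
qed

context
  fixes d h n :: nat and L :: real and E :: "nat \<Rightarrow> nat \<Rightarrow> bool"
    and a :: "nat \<times> nat \<Rightarrow> nat" and e :: "nat \<times> nat \<Rightarrow> nat \<times> nat \<Rightarrow> nat"
  assumes d2: "d \<ge> 2"
    and reg: "regular_graph h d E"
    and L20: "L \<ge> 20"
    and pat: "is_pattern E d n h a e"
    and npos: "n > 0" and hpos: "h > 0"
begin

definition base_wt :: real where "base_wt = 1 / sqrt (real n * real h)"

lemma base_wt_pos: "0 < base_wt" unfolding base_wt_def using npos hpos by simp

lemma wt_eq: "wt n h k = 2^k * base_wt" unfolding wt_def base_wt_def by simp

lemma wt_pos: "0 < wt n h k" using base_wt_pos wt_eq by simp

definition k_min :: nat where
  "k_min = (SOME k0. \<forall>v. a v \<noteq> 0 \<longrightarrow> wt n h k0 \<le> wt n h (snd v) \<and> wt n h (snd v) \<le> real d * wt n h k0)"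

definition scales :: "nat set" where "scales = {k_min..<k_min + d}"

definition box :: "(nat \<times> nat) set" where "box = {0..<h} \<times> scales"

lemma finite_box: "finite box" unfolding box_def scales_def by simp

(* Every vertex of positive mass lies in the box, because w_0 <= w <= d w_0 and d < 2^d. *)
lemma support_in_box: assumes "a v \<noteq> 0" shows "v \<in> box"
proof -
  have ex: "\<exists>k0. \<forall>v. a v \<noteq> 0 \<longrightarrow> wt n h k0 \<le> wt n h (snd v) \<and> wt n h (snd v) \<le> real d * wt n h k0"
    using pat unfolding is_pattern_def by blast
  have k: "wt n h k_min \<le> wt n h (snd v)" "wt n h (snd v) \<le> real d * wt n h k_min"
    using someI_ex[OF ex] assms unfolding k_min_def[symmetric] by blast+
  have "(2::real)^k_min \<le> 2^(snd v)" using k(1) base_wt_pos unfolding wt_eq by simp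
  hence lower: "k_min \<le> snd v" by simp
  have "(2::real)^(snd v) \<le> real d * 2^k_min" using k(2) base_wt_pos unfolding wt_eq by simp
  also have "\<dots> < 2^d * 2^k_min"
  proof -
    have "real d < real (2^d)" using less_exp[of d] by (simp only: of_nat_less_iff)
    thus ?thesis by (intro mult_strict_right_mono) auto
  qed
  also have "\<dots> = 2^(k_min + d)" by (simp add: power_add)
  finally have upper: "snd v < k_min + d" by simp
  have "fst v < h" using assms pat unfolding is_pattern_def by (metis not_le prod.collapse)
  thus ?thesis using lower upper unfolding box_def scales_def by (cases v) auto
qed

lemma outside_box_zero: "v \<notin> box \<Longrightarrow> a v = 0"
  using support_in_box by blast

lemma a_le_n: "a v \<le> n"
proof (cases "a v = 0")
  case False
  obtain i k where ik: "v = (i, k)" by (cases v)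
  have i: "i < h" using support_in_box[OF False] ik unfolding box_def by auto
  have fin: "finite {k. a (i, k) \<noteq> 0}"
    by (rule finite_subset[of _ scales]) (use support_in_box in \<open>auto simp: box_def scales_def\<close>)
  have "a (i, k) \<le> (\<Sum>k | a (i, k) \<noteq> 0. a (i, k))"
    using False ik by (intro member_le_sum fin) auto
  also have "\<dots> \<le> n" using pat i unfolding is_pattern_def by blast
  finally show ?thesis using ik by simp
qed simp

lemma mass_fraction_bounds: "0 \<le> real (a v) / real n" "real (a v) / real n \<le> 1"
  using a_le_n[of v] npos by auto

lemma E_sym: "E i j \<Longrightarrow> E j i" using reg unfolding regular_graph_def by blast
lemma E_irrefl: "\<not> E i i" using reg unfolding regular_graph_def by blast
lemma E_bounded: "E i j \<Longrightarrow> i < h \<and> j < h" using reg unfolding regular_graph_def by blast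

lemma card_in_neighbours: "j < h \<Longrightarrow> card {i\<in>{..<h}. E i j} = d"
proof -
  assume j: "j < h"
  have "{i\<in>{..<h}. E i j} = {i. E j i}" using E_sym E_bounded by auto
  thus ?thesis using reg j unfolding regular_graph_def by auto
qed

lemma gamma_edge_sym: assumes "gamma_edge E d n h x y" shows "gamma_edge E d n h y x"
proof -
  define r where "r = wt n h (snd x) / wt n h (snd y)"
  have r: "r > 0" unfolding r_def using wt_pos by simp
  have inv: "wt n h (snd y) / wt n h (snd x) = 1 / r" unfolding r_def by simp
  have "1 / sqrt d < r" "r < sqrt d" using assms unfolding gamma_edge_def r_def by auto
  hence "1 / sqrt d < 1 / r" "1 / r < sqrt d" using r d2 by (auto simp: field_simps)
  thus ?thesis using assms E_sym unfolding gamma_edge_def inv by auto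
qed

abbreviation sd :: "nat \<times> nat \<Rightarrow> nat \<times> nat \<Rightarrow> bool" where "sd \<equiv> sd_edge E d n h a e"

definition edge_term :: "nat \<times> nat \<Rightarrow> nat \<times> nat \<Rightarrow> real" where
  "edge_term v y = wt n h (snd v) * wt n h (snd y) * real (a v) * real (a y) / real n * eps n a e v y"

definition sq_term :: "nat \<times> nat \<Rightarrow> nat \<times> nat \<Rightarrow> real" where
  "sq_term v y = real (a v) * real (a y) / real n * (eps n a e v y)^2 / 15"

lemma sd_irrefl: "\<not> sd x x" unfolding sd_edge_def gamma_edge_def using E_irrefl by auto

lemma sd_sym: "sd x y \<Longrightarrow> sd y x \<and> edge_term x y = edge_term y x"
proof -
  assume s: "sd x y"
  hence g: "gamma_edge E d n h x y" unfolding sd_edge_def by auto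
  have "e x y = e y x" using pat g unfolding is_pattern_def by blast
  hence "eps n a e x y = eps n a e y x" unfolding eps_def by (auto simp: mult.commute)
  thus ?thesis using s gamma_edge_sym[OF g] unfolding sd_edge_def edge_term_def by (auto simp: mult_ac)
qed

definition degree_target :: "nat \<times> nat \<Rightarrow> real" where
  "degree_target v = (if a v = 0 then 0 else L / 10 * real (a v) * ln (exp 1 * real n / real (a v)))"

definition row_mass :: "nat \<Rightarrow> real" where
  "row_mass i = (\<Sum>k\<in>scales. (wt n h k)^2 * real (a (i, k)))"

definition nbr_mass :: "nat \<Rightarrow> real" where
  "nbr_mass i = (\<Sum>j<h. if E i j then row_mass j else 0)"

definition loss_bound :: "nat \<times> nat \<Rightarrow> real" where
  "loss_bound v = sqrt (3/2 * L) * sqrt (nbr_mass (fst v) / real n) * wt n h (snd v) * real n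
                   * phi (real (a v) / real n)"

lemma row_mass_nonneg: "0 \<le> row_mass i" unfolding row_mass_def by (intro sum_nonneg) auto

lemma nbr_mass_nonneg: "0 \<le> nbr_mass i" unfolding nbr_mass_def using row_mass_nonneg by (intro sum_nonneg) auto

lemma loss_bound_nonneg: "0 \<le> loss_bound v"
  unfolding loss_bound_def using nbr_mass_nonneg wt_pos[THEN less_imp_le] phi_nonneg[OF mass_fraction_bounds] L20
  by (intro mult_nonneg_nonneg) auto

lemma sum_box_neighbours:
  "(\<Sum>y\<in>box. if E i (fst y) then f y else 0) = (\<Sum>j<h. if E i j then (\<Sum>k\<in>scales. f (j, k)) else 0)"
proof -
  have "(\<Sum>j<h. if E i j then (\<Sum>k\<in>scales. f (j, k)) else 0) = (\<Sum>j<h. \<Sum>k\<in>scales. if E i j then f (j, k) else 0)"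
    by (intro sum.cong) auto
  also have "\<dots> = (\<Sum>(j, k)\<in>{..<h} \<times> scales. if E i j then f (j, k) else 0)" by (rule sum.cartesian_product)
  also have "\<dots> = (\<Sum>y\<in>box. if E i (fst y) then f y else 0)" unfolding box_def atLeast0LessThan
    by (intro sum.cong) auto
  finally show ?thesis by simp
qed

lemma incident_weight_bound:
  assumes U: "U \<subseteq> box"
  shows "(\<Sum>y\<in>U. if sd v y then (wt n h (snd v))^2 * (wt n h (snd y))^2 * (real (a v) * real (a y) / real n) else 0)
           \<le> (wt n h (snd v))^2 * real (a v) / real n * nbr_mass (fst v)"
proof -
  define w where "w = wt n h (snd v)"
  define q where "q = (\<lambda>y. real (a v) * real (a y) / real n)"
  have q: "0 \<le> q y" for y unfolding q_def by simp
  have "(\<Sum>y\<in>U. if sd v y then w^2 * (wt n h (snd y))^2 * q y else 0)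
       \<le> (\<Sum>y\<in>U. if E (fst v) (fst y) then w^2 * (wt n h (snd y))^2 * q y else 0)"
    using q by (intro sum_mono) (auto simp: sd_edge_def gamma_edge_def)
  also have "\<dots> \<le> (\<Sum>y\<in>box. if E (fst v) (fst y) then w^2 * (wt n h (snd y))^2 * q y else 0)"
    using q by (intro sum_mono2[OF finite_box U]) auto
  also have "\<dots> = (\<Sum>j<h. if E (fst v) j then (\<Sum>k\<in>scales. w^2 * (wt n h k)^2 * q (j, k)) else 0)"
    by (rule trans[OF sum_box_neighbours]) (simp only: snd_conv)
  also have "\<dots> = (\<Sum>j<h. (w^2 * real (a v) / real n) * (if E (fst v) j then row_mass j else 0))"
    unfolding row_mass_def q_def
    by (intro sum.cong refl) (auto simp: sum_distrib_left sum_divide_distrib mult_ac)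
  also have "\<dots> = w^2 * real (a v) / real n * nbr_mass (fst v)"
    unfolding nbr_mass_def by (simp add: sum_distrib_left)
  finally show ?thesis unfolding w_def q_def .
qed

lemma loss_bound_sq:
  assumes "a v \<noteq> 0"
  shows "(loss_bound v)^2 = 15 * degree_target v * ((wt n h (snd v))^2 * real (a v) / real n * nbr_mass (fst v))"
proof -
  define al where "al = real (a v) / real n"
  have al: "0 < al" "al \<le> 1" using mass_fraction_bounds[of v] assms npos unfolding al_def by auto
  have ln_eq: "ln (exp 1 * real n / real (a v)) = 1 - ln al"
    unfolding al_def using assms npos by (simp add: ln_mult ln_div)
  have a_eq: "real (a v) = al * real n" unfolding al_def using npos by simp
  have "(loss_bound v)^2 = (3/2 * L) * (nbr_mass (fst v) / real n) * (wt n h (snd v))^2 * (real n)^2 * (phi al)^2"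
    unfolding loss_bound_def al_def using L20 nbr_mass_nonneg[of "fst v"] npos
    by (simp add: power_mult_distrib)
  also have "\<dots> = (3/2 * L) * (nbr_mass (fst v) / real n) * (wt n h (snd v))^2 * (real n)^2 * (al^2 * (1 - ln al))"
    using phi_sq[OF al] by simp
  also have "\<dots> = 15 * degree_target v * ((wt n h (snd v))^2 * real (a v) / real n * nbr_mass (fst v))"
    unfolding degree_target_def ln_eq using assms npos by (simp add: a_eq power2_eq_square field_simps)
  finally show ?thesis .
qed

(* A vertex violating the degree condition in U has incident sum at most Phi(v), by
   Cauchy-Schwarz applied to eps * sqrt(q) and w w' * sqrt(q), where q = a_v a_y / n. *)
lemma violator_incident_bound:
  assumes U: "U \<subseteq> box" and violates: "\<not> degree_target v \<le> incident_sum sd sq_term U v"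
  shows "\<bar>incident_sum sd edge_term U v\<bar> \<le> loss_bound v"
proof -
  have deg_nonneg: "0 \<le> incident_sum sd sq_term U v"
    unfolding incident_sum_def sq_term_def by (intro sum_nonneg) auto
  have av: "a v \<noteq> 0" using violates deg_nonneg unfolding degree_target_def by (auto split: if_splits)
  define w where "w = wt n h (snd v)"
  define q where "q = (\<lambda>y. real (a v) * real (a y) / real n)"
  have q: "0 \<le> q y" for y unfolding q_def by simp
  define x where "x = (\<lambda>y. if sd v y then eps n a e v y * sqrt (q y) else 0)"
  define z where "z = (\<lambda>y. if sd v y then w * wt n h (snd y) * sqrt (q y) else 0)"
  have split: "(if sd v y then edge_term v y else 0) = x y * z y" for y
  proof -
    have "sqrt (q y) * sqrt (q y) = q y" using q[of y] by simp
    thus ?thesis unfolding x_def z_def edge_term_def q_def w_def by (simp add: mult_ac)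
  qed
  have x_sq: "(\<Sum>y\<in>U. (x y)^2) = 15 * incident_sum sd sq_term U v"
    unfolding incident_sum_def sq_term_def sum_distrib_left x_def
    using q by (intro sum.cong) (auto simp: power_mult_distrib q_def)
  have "(\<Sum>y\<in>U. (z y)^2) = (\<Sum>y\<in>U. if sd v y then w^2 * (wt n h (snd y))^2 * q y else 0)"
    unfolding z_def using q by (intro sum.cong) (auto simp: power_mult_distrib)
  also have "\<dots> \<le> w^2 * real (a v) / real n * nbr_mass (fst v)"
    using incident_weight_bound[OF U, of v] unfolding w_def q_def .
  finally have z_sq: "(\<Sum>y\<in>U. (z y)^2) \<le> w^2 * real (a v) / real n * nbr_mass (fst v)" .
  have "(incident_sum sd edge_term U v)^2 = (\<Sum>y\<in>U. x y * z y)^2"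
    unfolding incident_sum_def split ..
  also have "\<dots> \<le> (\<Sum>y\<in>U. (x y)^2) * (\<Sum>y\<in>U. (z y)^2)" by (rule Cauchy_Schwarz_ineq_sum)
  also have "\<dots> \<le> (15 * degree_target v) * (w^2 * real (a v) / real n * nbr_mass (fst v))"
    unfolding x_sq using violates z_sq deg_nonneg by (intro mult_mono) (auto intro: sum_nonneg)
  also have "\<dots> = (loss_bound v)^2" unfolding loss_bound_sq[OF av] w_def by simp
  finally show ?thesis using loss_bound_nonneg[of v] by (simp add: power2_le_iff_abs_le)
qed

(* Double counting with d-regularity: sum_i Y_i = d sum_i M_i. *)
lemma sum_nbr_mass: "(\<Sum>i<h. nbr_mass i) = real d * (\<Sum>i<h. row_mass i)"
proof -
  have "(\<Sum>i<h. nbr_mass i) = (\<Sum>j<h. \<Sum>i<h. if E i j then row_mass j else 0)"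
    unfolding nbr_mass_def by (rule sum.swap)
  also have "\<dots> = (\<Sum>j<h. real d * row_mass j)"
  proof (intro sum.cong refl)
    fix j assume "j \<in> {..<h}"
    hence "(\<Sum>i<h. if E i j then row_mass j else 0) = card {i\<in>{..<h}. E i j} * row_mass j"
      using sum.inter_filter[of "{..<h}" "\<lambda>i. row_mass j" "\<lambda>i. E i j"] by simp
    also have "\<dots> = real d * row_mass j" using card_in_neighbours \<open>j \<in> {..<h}\<close> by simp
    finally show "(\<Sum>i<h. if E i j then row_mass j else 0) = real d * row_mass j" .
  qed
  finally show ?thesis by (simp add: sum_distrib_left)
qed

lemma sum_row_mass: "(\<Sum>i<h. row_mass i) \<le> 10"
proof -
  have "(\<Sum>i<h. row_mass i) = (\<Sum>v\<in>box. (wt n h (snd v))^2 * real (a v))"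
    unfolding row_mass_def box_def atLeast0LessThan by (simp add: sum.cartesian_product split_beta)
  also have "\<dots> = (\<Sum>v | a v \<noteq> 0. (wt n h (snd v))^2 * real (a v))"
    by (rule sum.mono_neutral_right[OF finite_box]) (auto intro: support_in_box)
  also have "\<dots> \<le> 10" using pat unfolding is_pattern_def by blast
  finally show ?thesis .
qed

(* Summing Phi along row i: the dyadic sum bound turns it into C sqrt(Y_i M_i). *)
lemma row_loss_bound:
  "(\<Sum>k\<in>scales. loss_bound (i, k)) \<le> sqrt (3/2 * L) * (13 * sqrt 2) * sqrt (nbr_mass i * row_mass i)"
proof -
  define X where "X = (\<Sum>k\<in>scales. 4^k * (real (a (i, k)) / real n))"
  have row_mass_eq: "row_mass i = base_wt^2 * real n * X"
  proof -
    have "(wt n h k)^2 = 4^k * base_wt^2" for k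
      unfolding wt_eq by (simp add: power_mult_distrib power2_eq_square flip: power_mult_distrib)
    thus ?thesis unfolding row_mass_def X_def using npos by (simp add: sum_distrib_left field_simps)
  qed
  have "(\<Sum>k\<in>scales. loss_bound (i, k)) = sqrt (3/2 * L) * sqrt (nbr_mass i / real n) * real n * base_wt *
          (\<Sum>k\<in>scales. 2^k * phi (real (a (i, k)) / real n))"
    unfolding loss_bound_def wt_eq by (simp add: sum_distrib_left mult_ac)
  also have "\<dots> \<le> sqrt (3/2 * L) * sqrt (nbr_mass i / real n) * real n * base_wt * (13 * sqrt 2 * sqrt X)"
    unfolding X_def using base_wt_pos nbr_mass_nonneg[of i] L20
    by (intro mult_left_mono dyadic_phi_sum_bound) (auto simp: mass_fraction_bounds scales_def)
  also have "\<dots> = sqrt (3/2 * L) * (13 * sqrt 2) * sqrt (nbr_mass i / real n * (real n * base_wt)^2 * X)"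
  proof -
    have "sqrt (nbr_mass i / real n * (real n * base_wt)^2 * X)
        = sqrt (nbr_mass i / real n) * sqrt ((real n * base_wt)^2) * sqrt X"
      by (simp only: real_sqrt_mult)
    also have "sqrt ((real n * base_wt)^2) = real n * base_wt" using base_wt_pos by simp
    finally show ?thesis by (simp add: mult_ac)
  qed
  also have "nbr_mass i / real n * (real n * base_wt)^2 * X = nbr_mass i * row_mass i"
    unfolding row_mass_eq using npos by (simp add: power2_eq_square field_simps)
  finally show ?thesis .
qed

(* AM-GM with weights sqrt d and 1/sqrt d, then regularity: the total deletion cost is at
   most 55 L sqrt d. *)
lemma total_loss_bound: "(\<Sum>v\<in>box. loss_bound v) \<le> 55 * L * sqrt (real d)"
proof -
  define r where "r = sqrt (real d)"
  have r: "0 < r" "r * r = real d" unfolding r_def using d2 by auto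
  define C where "C = sqrt (3/2 * L) * (13 * sqrt 2)"
  have C: "0 \<le> C" unfolding C_def using L20 by simp
  have amgm: "sqrt (nbr_mass i * row_mass i) \<le> (r * row_mass i + nbr_mass i / r) / 2" for i
  proof -
    have "sqrt (nbr_mass i * row_mass i) = sqrt ((r * row_mass i) * (nbr_mass i / r))" using r by simp
    also have "\<dots> \<le> (r * row_mass i + nbr_mass i / r) / 2"
      using r row_mass_nonneg[of i] nbr_mass_nonneg[of i] by (intro arith_geo_mean_sqrt) auto
    finally show ?thesis .
  qed
  have "(\<Sum>v\<in>box. loss_bound v) = (\<Sum>i<h. \<Sum>k\<in>scales. loss_bound (i, k))"
    unfolding box_def atLeast0LessThan by (simp add: sum.cartesian_product)
  also have "\<dots> \<le> (\<Sum>i<h. C * sqrt (nbr_mass i * row_mass i))"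
    unfolding C_def by (intro sum_mono row_loss_bound)
  also have "\<dots> \<le> (\<Sum>i<h. C * ((r * row_mass i + nbr_mass i / r) / 2))"
    by (intro sum_mono mult_left_mono amgm C)
  also have "\<dots> = C / 2 * (\<Sum>i<h. r * row_mass i + nbr_mass i / r)"
    by (simp add: sum_distrib_left)
  also have "\<dots> = C / 2 * (r * (\<Sum>i<h. row_mass i) + (\<Sum>i<h. nbr_mass i) / r)"
    by (simp add: sum.distrib sum_distrib_left sum_divide_distrib)
  also have "\<dots> = C * r * (\<Sum>i<h. row_mass i)"
    unfolding sum_nbr_mass r(2)[symmetric] using r by (simp add: field_simps)
  also have "\<dots> \<le> C * r * 10" using sum_row_mass C r by (intro mult_left_mono) auto
  also have "\<dots> = C * 10 * r" by simp
  also have "\<dots> \<le> 55 * L * r"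
    using loss_constant[OF L20] r unfolding C_def by (intro mult_right_mono) auto
  finally show ?thesis unfolding r_def .
qed

lemma p_SD_eq_edge_sum: "p_SD E d n h a e = \<bar>1/2 * edge_sum sd edge_term box\<bar>"
proof -
  have "(\<Sum>\<^sub>\<infinity>(v, v')\<in>{(v, v'). sd v v'}. wt n h (snd v) * wt n h (snd v') * real (a v) * real (a v') / real n * eps n a e v v')
     = edge_sum sd edge_term box"
    unfolding edge_term_def[symmetric]
    by (rule infsum_pairs_eq_edge_sum[OF finite_box]) (auto simp: edge_term_def outside_box_zero)
  thus ?thesis unfolding p_SD_def by simp
qed

lemma p_SD_sub_eq_edge_sum:
  assumes S: "S \<subseteq> box"
  shows "p_SD E d n h (sub_a S a) (sub_e S e) = \<bar>1/2 * edge_sum sd edge_term S\<bar>"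
proof -
  have fin: "finite S" using S finite_box finite_subset by auto
  have eps_eq: "eps n (sub_a S a) (sub_e S e) x y = eps n a e x y" if "x \<in> S" "y \<in> S" for x y
    using that unfolding eps_def sub_a_def sub_e_def by simp
  have "(\<Sum>\<^sub>\<infinity>(v, v')\<in>{(v, v'). sd_edge E d n h (sub_a S a) (sub_e S e) v v'}.
          wt n h (snd v) * wt n h (snd v') * real (sub_a S a v) * real (sub_a S a v') / real n
          * eps n (sub_a S a) (sub_e S e) v v')
     = edge_sum (sd_edge E d n h (sub_a S a) (sub_e S e))
         (\<lambda>v v'. wt n h (snd v) * wt n h (snd v') * real (sub_a S a v) * real (sub_a S a v') / real n
                  * eps n (sub_a S a) (sub_e S e) v v') S"
    by (rule infsum_pairs_eq_edge_sum[OF fin]) (auto simp: sub_a_def)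
  also have "\<dots> = edge_sum sd edge_term S"
    unfolding edge_sum_def incident_sum_def
    by (intro sum.cong refl) (auto simp: eps_eq sd_edge_def edge_term_def sub_a_def)
  finally show ?thesis unfolding p_SD_def by simp
qed

lemma pruned_subpattern:
  "\<exists>S \<subseteq> {0..<h} \<times> (UNIV :: nat set).
     p_SD E d n h (sub_a S a) (sub_e S e) \<ge> p_SD E d n h a e - 55 * L * sqrt (real d) \<and>
     (\<forall>v \<in> S. (\<Sum>\<^sub>\<infinity>v' \<in> {v'. sd_edge E d n h a e v v'} \<inter> S.
          real (a v) * real (a v') / real n * (eps n a e v v')\<^sup>2 / 15)
        \<ge> (if a v = 0 then 0 else L / 10 * real (a v) * ln (exp 1 * real n / real (a v))))"
proof -
  have "\<exists>S \<subseteq> box. (\<forall>v\<in>S. degree_target v \<le> incident_sum sd sq_term S v) \<and>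
      \<bar>edge_sum sd edge_term box - edge_sum sd edge_term S\<bar> \<le> 2 * (\<Sum>v\<in>box - S. loss_bound v)"
  proof (rule greedy_pruning[OF finite_box sd_irrefl sd_sym _ subset_refl])
    fix U v assume "U \<subseteq> box" "\<not> degree_target v \<le> incident_sum sd sq_term U v"
    thus "\<bar>incident_sum sd edge_term U v\<bar> \<le> loss_bound v" by (rule violator_incident_bound)
  qed
  then obtain S where S: "S \<subseteq> box" "\<forall>v\<in>S. degree_target v \<le> incident_sum sd sq_term S v"
    "\<bar>edge_sum sd edge_term box - edge_sum sd edge_term S\<bar> \<le> 2 * (\<Sum>v\<in>box - S. loss_bound v)"
    by blast
  have fin: "finite S" using S(1) finite_box finite_subset by auto
  have "(\<Sum>v\<in>box - S. loss_bound v) \<le> (\<Sum>v\<in>box. loss_bound v)"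
    using loss_bound_nonneg by (intro sum_mono2[OF finite_box]) auto
  hence "\<bar>edge_sum sd edge_term box - edge_sum sd edge_term S\<bar> \<le> 2 * (55 * L * sqrt (real d))"
    using S(3) total_loss_bound by linarith
  hence loss: "p_SD E d n h (sub_a S a) (sub_e S e) \<ge> p_SD E d n h a e - 55 * L * sqrt (real d)"
    unfolding p_SD_sub_eq_edge_sum[OF S(1)] p_SD_eq_edge_sum by linarith
  have degree: "(\<Sum>\<^sub>\<infinity>v' \<in> {v'. sd v v'} \<inter> S. real (a v) * real (a v') / real n * (eps n a e v v')\<^sup>2 / 15)
        \<ge> (if a v = 0 then 0 else L / 10 * real (a v) * ln (exp 1 * real n / real (a v)))" if "v \<in> S" for v
    using infsum_neighbours_eq_incident_sum[OF fin, where R = sd and f = sq_term and v = v] S(2) that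
    unfolding sq_term_def degree_target_def by simp
  have "S \<subseteq> {0..<h} \<times> (UNIV :: nat set)" using S(1) unfolding box_def by auto
  thus ?thesis using loss degree by blast
qed

end

(* Degenerate patterns (n = 0 or h = 0) have p_SD = 0, so the empty set works. *)
lemma p_SD_empty_subpattern: "p_SD E d n h (sub_a {} a) (sub_e {} e) = 0"
  unfolding p_SD_def sub_a_def by (simp add: case_prod_unfold)

lemma p_SD_degenerate:
  assumes pat: "is_pattern E d n h a e" and degenerate: "n = 0 \<or> h = 0"
  shows "p_SD E d n h a e = 0"
proof -
  have "wt n h (snd v) * wt n h (snd v') * real (a v) * real (a v') / real n * eps n a e v v' = 0" for v v'
  proof (cases "n = 0")
    case False
    hence "h = 0" using degenerate by simp
    hence "a v = 0" using pat unfolding is_pattern_def by (metis le0 prod.collapse)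
    thus ?thesis by simp
  qed simp
  hence "(\<lambda>(v, v'). wt n h (snd v) * wt n h (snd v') * real (a v) * real (a v') / real n * eps n a e v v')
      = (\<lambda>_. 0)"
    by (auto simp: fun_eq_iff)
  thus ?thesis unfolding p_SD_def by simp
qed

theorem proposition5p3:
  fixes d h n :: nat and L :: real and E :: "nat \<Rightarrow> nat \<Rightarrow> bool"
    and a :: "nat \<times> nat \<Rightarrow> nat" and e :: "nat \<times> nat \<Rightarrow> nat \<times> nat \<Rightarrow> nat"
  assumes "d \<ge> 2"
    and "regular_graph h d E"
    and "L \<ge> 20"
    and "is_pattern E d n h a e"
  shows "\<exists>S \<subseteq> {0..<h} \<times> (UNIV :: nat set).
     p_SD E d n h (sub_a S a) (sub_e S e) \<ge> p_SD E d n h a e - 55 * L * sqrt (real d) \<and>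
     (\<forall>v \<in> S. (\<Sum>\<^sub>\<infinity>v' \<in> {v'. sd_edge E d n h a e v v'} \<inter> S.
          real (a v) * real (a v') / real n * (eps n a e v v')\<^sup>2 / 15)
        \<ge> (if a v = 0 then 0 else L / 10 * real (a v) * ln (exp 1 * real n / real (a v))))"
proof (cases "n = 0 \<or> h = 0")
  case True
  then show ?thesis
    using p_SD_degenerate[OF assms(4) True] p_SD_empty_subpattern \<open>L \<ge> 20\<close>
    by (intro exI[of _ "{}"]) auto
next
  case False
  then show ?thesis by (intro pruned_subpattern[OF assms]) auto
qed

end
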